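(* Fix real numbers $\beta_0,\beta_3,\beta_4$ and a constant $k$. For $(\beta_1,\beta_2)\in\mathbb{R}^2$ let $T$ be the $3\times3$ matrix $$T=\begin{pmatrix}\beta_1&\beta_2&0\\ \beta_3&\beta_4&0\\ 0&0&\beta_0\end{pmatrix},$$ and let $\mathcal{M}(\beta_1,\beta_2)$ be the sum of the two largest eigenvalues of $T^{T}T$. Then the set $\{(\beta_1,\beta_2)\in\mathbb{R}^2:\mathcal{M}(\beta_1,\beta_2)=k\}$ is a connected subset of the union of a circle and an ellipse, both centered at the origin. It consists of the arcs of the circle lying within the ellipse and the arcs of the ellipse lying within the circle.
   Context: For a Group 2 two-qubit $X$-state, or a Mermin (grid) hyperplane-state sharing its correlation operators, the correlation matrix $\beta$ (with entries the coefficients of the operators $\sigma_i\otimes\sigma_j$, $\sigma_i,\sigma_j\in\{X,Y,Z\}$) can be brought, by permuting rows and columns, to the form $T$ above. Here $\beta_0$ is the coefficient of the distinguished correlation operator and $\beta_1,\dots,\beta_4$ are the remaining four correlation coefficients. The states are not required to be valid (positive semidefinite). The quantity $\mathcal{M}$ is the Horodecki Bell-violation quantity: the sum of the two largest eigenvalues of $\beta^T\beta$. *)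

theory Defs
  imports "Jordan_Normal_Form.Char_Poly"
begin

definition eigenvalues_mset :: "real mat \<Rightarrow> real multiset" where
  "eigenvalues_mset A = proots (char_poly A)"

definition sum_two_largest_eigenvalues :: "real mat \<Rightarrow> real" where
  "sum_two_largest_eigenvalues A =
     (let ev = rev (sorted_list_of_multiset (eigenvalues_mset A)) in ev ! 0 + ev ! 1)"

definition horodecki_M :: "real mat \<Rightarrow> real" where
  "horodecki_M B = sum_two_largest_eigenvalues (transpose_mat B * B)"

definition T_mat :: "real \<Rightarrow> real \<Rightarrow> real \<Rightarrow> real \<Rightarrow> real \<Rightarrow> real mat" where
  "T_mat b0 b1 b2 b3 b4 =
     mat_of_rows_list 3 [[b1, b2, 0], [b3, b4, 0], [0, 0, b0]]"

definition circle0 :: "real \<Rightarrow> (real \<times> real) set" where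
  "circle0 r = {(x, y). x\<^sup>2 + y\<^sup>2 = r\<^sup>2}"

definition disk0 :: "real \<Rightarrow> (real \<times> real) set" where
  "disk0 r = {(x, y). x\<^sup>2 + y\<^sup>2 \<le> r\<^sup>2}"

text \<open>(Possibly degenerate) ellipse centred at the origin: image of the unit circle
  under the linear map with matrix [[a,b],[c,d]]; and the closed region it bounds
  (image of the closed unit disk).\<close>
definition ellipse0 :: "real \<Rightarrow> real \<Rightarrow> real \<Rightarrow> real \<Rightarrow> (real \<times> real) set" where
  "ellipse0 a b c d = {(a * u + b * v, c * u + d * v) | u v. u\<^sup>2 + v\<^sup>2 = 1}"

definition filled_ellipse0 :: "real \<Rightarrow> real \<Rightarrow> real \<Rightarrow> real \<Rightarrow> (real \<times> real) set" where
  "filled_ellipse0 a b c d = {(a * u + b * v, c * u + d * v) | u v. u\<^sup>2 + v\<^sup>2 \<le> 1}"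

end

theory Submission
  imports Defs "HOL-Analysis.Analysis"
begin

(* Let B be the upper left 2x2 block of T, n = b3^2 + b4^2 and m = k - b0^2. The eigenvalues of
   T^T T are b0^2 and the eigenvalues L >= l of B^T B, the roots of X^2 - p X + q with
   p = |B|^2 and q = (det B)^2. Hence M = L + max l b0^2, and as L + l = p, M = k holds iff
   either p = k and L <= m, or L = m and p <= k. Since L >= n, the level set is empty unless
   n <= m. In the coordinates along and across the row (b3, b4), the condition p = k (p <= k)
   is a circle (disk) of radius sqrt (k - n), and L <= m (L = m) is a filled ellipse (ellipse)
   with semi-axes sqrt (m - n) and sqrt m. So the level set is the boundary of the intersection
   of the disk with the filled ellipse: connected as the boundary of a plane convex body with
   interior, or, if the ellipse degenerates to a segment, a convex set. *)

section \<open>Roots of a monic quadratic\<close>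

definition larger_root :: "real \<Rightarrow> real \<Rightarrow> real" where
  "larger_root p q = (p + sqrt (p\<^sup>2 - 4 * q)) / 2"

definition smaller_root :: "real \<Rightarrow> real \<Rightarrow> real" where
  "smaller_root p q = (p - sqrt (p\<^sup>2 - 4 * q)) / 2"

lemma smaller_root_le_larger_root: "4 * q \<le> p\<^sup>2 \<Longrightarrow> smaller_root p q \<le> larger_root p q"
  by (simp add: smaller_root_def larger_root_def)

lemma larger_root_add_smaller_root: "larger_root p q + smaller_root p q = p"
  by (simp add: larger_root_def smaller_root_def field_simps)

lemma monic_quadratic_factors:
  assumes "4 * q \<le> p\<^sup>2"
  shows "[:q, -p, 1:] = [:- larger_root p q, 1:] * [:- smaller_root p q, 1:]"
proof -
  have "larger_root p q * smaller_root p q = (p\<^sup>2 - (sqrt (p\<^sup>2 - 4 * q))\<^sup>2) / 4"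
    by (simp add: larger_root_def smaller_root_def power2_eq_square field_simps)
  also have "\<dots> = q"
    using assms by simp
  finally show ?thesis
    using larger_root_add_smaller_root[of p q] by (simp add: algebra_simps)
qed

lemma quadratic_discriminant_nonneg:
  fixes n p q :: real
  assumes "q \<le> n * (p - n)"
  shows "4 * q \<le> p\<^sup>2"
proof -
  have "4 * (n * (p - n)) = p\<^sup>2 - (p - 2 * n)\<^sup>2"
    by (simp add: power2_eq_square algebra_simps)
  then show ?thesis
    using assms zero_le_power2[of "p - 2 * n"] by linarith
qed

lemma le_larger_root:
  assumes "q \<le> n * (p - n)"
  shows "n \<le> larger_root p q"
proof -
  have "(2 * n - p)\<^sup>2 \<le> p\<^sup>2 - 4 * q"
    using assms by (simp add: power2_eq_square algebra_simps)
  then have "2 * n - p \<le> sqrt (p\<^sup>2 - 4 * q)"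
    by (rule real_le_rsqrt)
  then show ?thesis
    by (simp add: larger_root_def)
qed

lemma larger_root_le_iff:
  assumes "4 * q \<le> p\<^sup>2"
  shows "larger_root p q \<le> m \<longleftrightarrow> p \<le> 2 * m \<and> m * (p - m) \<le> q"
proof -
  have D: "0 \<le> p\<^sup>2 - 4 * q"
    using assms by simp
  have "larger_root p q \<le> m \<longleftrightarrow> sqrt (p\<^sup>2 - 4 * q) \<le> 2 * m - p"
    by (auto simp: larger_root_def)
  also have "\<dots> \<longleftrightarrow> p \<le> 2 * m \<and> p\<^sup>2 - 4 * q \<le> (2 * m - p)\<^sup>2"
  proof (cases "p \<le> 2 * m")
    case True
    then show ?thesis using real_sqrt_le_iff'[OF D, of "2 * m - p"] by simp
  next
    case False
    then show ?thesis using real_sqrt_ge_zero[OF D] by (smt (verit))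
  qed
  also have "\<dots> \<longleftrightarrow> p \<le> 2 * m \<and> m * (p - m) \<le> q"
    by (auto simp: power2_eq_square algebra_simps)
  finally show ?thesis .
qed

lemma larger_root_eq_iff:
  assumes "4 * q \<le> p\<^sup>2"
  shows "larger_root p q = m \<longleftrightarrow> p \<le> 2 * m \<and> m * (p - m) = q"
proof -
  have D: "0 \<le> p\<^sup>2 - 4 * q"
    using assms by simp
  have "larger_root p q = m \<longleftrightarrow> sqrt (p\<^sup>2 - 4 * q) = 2 * m - p"
    by (auto simp: larger_root_def)
  also have "\<dots> \<longleftrightarrow> p \<le> 2 * m \<and> p\<^sup>2 - 4 * q = (2 * m - p)\<^sup>2"
  proof (cases "p \<le> 2 * m")
    case True
    then show ?thesis using real_sqrt_unique[of "2 * m - p"] real_sqrt_pow2[OF D] by (smt (verit))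
  next
    case False
    then show ?thesis using real_sqrt_ge_zero[OF D] by (smt (verit))
  qed
  also have "\<dots> \<longleftrightarrow> p \<le> 2 * m \<and> m * (p - m) = q"
    by (auto simp: power2_eq_square algebra_simps)
  finally show ?thesis .
qed

section \<open>The Horodecki quantity of T\<close>

lemma det_1x1:
  assumes "(A :: 'a :: comm_ring_1 mat) \<in> carrier_mat 1 1"
  shows "Determinant.det A = A $$ (0, 0)"
  using laplace_expansion_column[OF assms, of 0] assms
  by (simp add: cofactor_def mat_delete_def)

lemma det_2x2:
  assumes "(A :: 'a :: comm_ring_1 mat) \<in> carrier_mat 2 2"
  shows "Determinant.det A = A $$ (0, 0) * A $$ (1, 1) - A $$ (0, 1) * A $$ (1, 0)"
  using laplace_expansion_column[OF assms, of 1] assms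
  by (simp add: cofactor_def numeral_2_eq_2 lessThan_Suc det_1x1 mat_delete_def insert_index_def)

lemma det_3x3:
  assumes "(A :: 'a :: comm_ring_1 mat) \<in> carrier_mat 3 3"
  shows "Determinant.det A =
      A $$ (0, 0) * (A $$ (1, 1) * A $$ (2, 2) - A $$ (1, 2) * A $$ (2, 1))
    - A $$ (1, 0) * (A $$ (0, 1) * A $$ (2, 2) - A $$ (0, 2) * A $$ (2, 1))
    + A $$ (2, 0) * (A $$ (0, 1) * A $$ (1, 2) - A $$ (0, 2) * A $$ (1, 1))"
  using laplace_expansion_column[OF assms, of 0] assms
  by (simp add: cofactor_def numeral_3_eq_3 lessThan_Suc det_2x2 mat_delete_def insert_index_def
      algebra_simps numeral_2_eq_2)

lemma det2_power2_le:
  fixes b1 b2 b3 b4 :: real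
  shows "(b1 * b4 - b2 * b3)\<^sup>2 \<le> (b3\<^sup>2 + b4\<^sup>2) * (b1\<^sup>2 + b2\<^sup>2)"
proof -
  have "(b3\<^sup>2 + b4\<^sup>2) * (b1\<^sup>2 + b2\<^sup>2) = (b1 * b4 - b2 * b3)\<^sup>2 + (b1 * b3 + b2 * b4)\<^sup>2"
    by (simp add: power2_eq_square algebra_simps)
  then show ?thesis
    by simp
qed

lemma char_poly_gram_T_mat:
  fixes b0 b1 b2 b3 b4 :: real
  shows "char_poly (transpose_mat (T_mat b0 b1 b2 b3 b4) * T_mat b0 b1 b2 b3 b4) =
    [:(b1 * b4 - b2 * b3)\<^sup>2, -(b1\<^sup>2 + b2\<^sup>2 + b3\<^sup>2 + b4\<^sup>2), 1:] * [:-(b0\<^sup>2), 1:]"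
proof -
  let ?T = "T_mat b0 b1 b2 b3 b4"
  let ?G = "transpose_mat ?T * ?T"
  have T: "?T = Matrix.mat 3 3 (\<lambda>(i, j). [[b1, b2, 0], [b3, b4, 0], [0, 0, b0]] ! i ! j)"
    unfolding T_mat_def mat_of_rows_list_def by (simp add: numeral_3_eq_3)
  have G_carrier: "?G \<in> carrier_mat 3 3"
    unfolding T by auto
  have "?G $$ (i, j) = (\<Sum>k<3. ?T $$ (k, i) * ?T $$ (k, j))" if "i < 3" "j < 3" for i j
    using that unfolding T by (simp add: scalar_prod_def lessThan_atLeast0)
  then have G: "?G $$ (0, 0) = b1\<^sup>2 + b3\<^sup>2" "?G $$ (1, 1) = b2\<^sup>2 + b4\<^sup>2" "?G $$ (2, 2) = b0\<^sup>2"
    "?G $$ (0, 1) = b1 * b2 + b3 * b4" "?G $$ (1, 0) = b1 * b2 + b3 * b4"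
    "?G $$ (0, 2) = 0" "?G $$ (2, 0) = 0" "?G $$ (1, 2) = 0" "?G $$ (2, 1) = 0"
    by (simp_all add: T numeral_3_eq_3 lessThan_Suc power2_eq_square)
  have char_entry: "char_poly_matrix ?G $$ (i, j) =
      (if i = j then [:0, 1:] else 0) + [:- (?G $$ (i, j)):]" if "i < 3" "j < 3" for i j
    using that G_carrier unfolding char_poly_matrix_def by auto
  have "char_poly ?G =
      ([:0, 1:] + [:-(b1\<^sup>2 + b3\<^sup>2):]) * (([:0, 1:] + [:-(b2\<^sup>2 + b4\<^sup>2):]) * ([:0, 1:] + [:-(b0\<^sup>2):]))
    - [:-(b1 * b2 + b3 * b4):] * ([:-(b1 * b2 + b3 * b4):] * ([:0, 1:] + [:-(b0\<^sup>2):]))"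
    using G_carrier unfolding char_poly_def
    by (subst det_3x3) (simp_all add: char_entry G[simplified])
  also have "\<dots> = [:(b1 * b4 - b2 * b3)\<^sup>2, -(b1\<^sup>2 + b2\<^sup>2 + b3\<^sup>2 + b4\<^sup>2), 1:] * [:-(b0\<^sup>2), 1:]"
    by (intro poly_ext) (simp add: power2_eq_square algebra_simps)
  finally show ?thesis .
qed

lemma sum_two_largest_eigenvalues_three:
  assumes "eigenvalues_mset A = {#x, y, z#}"
  shows "sum_two_largest_eigenvalues A = x + y + z - min x (min y z)"
  using assms by (auto simp: sum_two_largest_eigenvalues_def Let_def min_def)

lemma horodecki_M_T_mat:
  fixes b0 b1 b2 b3 b4 :: real
  defines "p \<equiv> b1\<^sup>2 + b2\<^sup>2 + b3\<^sup>2 + b4\<^sup>2" and "q \<equiv> (b1 * b4 - b2 * b3)\<^sup>2"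
  shows "horodecki_M (T_mat b0 b1 b2 b3 b4) = larger_root p q + max (smaller_root p q) (b0\<^sup>2)"
proof -
  have "q \<le> (b3\<^sup>2 + b4\<^sup>2) * (p - (b3\<^sup>2 + b4\<^sup>2))"
    using det2_power2_le[of b1 b4 b2 b3] by (simp add: p_def q_def)
  then have disc: "4 * q \<le> p\<^sup>2"
    by (rule quadratic_discriminant_nonneg)
  have "eigenvalues_mset (transpose_mat (T_mat b0 b1 b2 b3 b4) * T_mat b0 b1 b2 b3 b4) =
      {#larger_root p q, smaller_root p q, b0\<^sup>2#}"
    unfolding eigenvalues_mset_def char_poly_gram_T_mat p_def[symmetric] q_def[symmetric]
      monic_quadratic_factors[OF disc]
    by (simp add: proots_mult del: mult_pCons_left mult_pCons_right)
  then show ?thesis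
    using smaller_root_le_larger_root[OF disc]
    by (simp add: horodecki_M_def sum_two_largest_eigenvalues_three min_def max_def)
qed

lemma horodecki_M_T_mat_ge: "b3\<^sup>2 + b4\<^sup>2 + b0\<^sup>2 \<le> horodecki_M (T_mat b0 b1 b2 b3 b4)"
proof -
  have "b3\<^sup>2 + b4\<^sup>2 \<le> larger_root (b1\<^sup>2 + b2\<^sup>2 + b3\<^sup>2 + b4\<^sup>2) ((b1 * b4 - b2 * b3)\<^sup>2)"
    using det2_power2_le[of b1 b4 b2 b3] by (intro le_larger_root) simp
  then show ?thesis
    unfolding horodecki_M_T_mat by linarith
qed

section \<open>The level sets as circle and ellipse arcs\<close>

(* The last two conjuncts only matter in the degenerate case m = n, where the ellipse is a segment. *)
lemma ellipse_inequality_iff: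
  fixes m n x y :: real
  assumes "0 \<le> n" "n \<le> m"
  shows "x\<^sup>2 + y\<^sup>2 + n \<le> 2 * m \<and> m * (x\<^sup>2 + y\<^sup>2 + n - m) \<le> n * y\<^sup>2 \<longleftrightarrow>
    m * x\<^sup>2 + (m - n) * y\<^sup>2 \<le> (m - n) * m \<and> x\<^sup>2 \<le> m - n \<and> y\<^sup>2 \<le> m"
    (is "?P \<le> 2 * m \<and> ?lhs \<longleftrightarrow> ?Q \<le> ?c \<and> ?x \<and> ?y")
proof -
  have nonneg: "0 \<le> m * x\<^sup>2" "0 \<le> (m - n) * y\<^sup>2"
    using assms by simp_all
  have identity: "m * (x\<^sup>2 + y\<^sup>2 + n - m) - n * y\<^sup>2 = ?Q - ?c"
    by (simp add: algebra_simps)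
  show ?thesis
  proof
    assume P: "?P \<le> 2 * m \<and> ?lhs"
    then have Q: "?Q \<le> ?c"
      using identity by linarith
    have "m * (x\<^sup>2 - (m - n)) \<le> 0"
      using Q nonneg(2) by (simp add: algebra_simps)
    moreover have "x\<^sup>2 \<le> 0" if "m = 0"
      using P assms that zero_le_power2[of y] by linarith
    ultimately have "x\<^sup>2 \<le> m - n"
      using assms by (cases "m = 0") (auto simp: mult_le_0_iff)
    moreover have "(m - n) * (y\<^sup>2 - m) \<le> 0"
      using Q nonneg(1) by (simp add: algebra_simps)
    moreover have "y\<^sup>2 \<le> m" if "m = n"
      using P that zero_le_power2[of x] by linarith
    ultimately show "?Q \<le> ?c \<and> ?x \<and> ?y"
      using Q assms by (cases "m = n") (auto simp: mult_le_0_iff)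
  next
    assume "?Q \<le> ?c \<and> ?x \<and> ?y"
    then show "?P \<le> 2 * m \<and> ?lhs"
      using identity by linarith
  qed
qed

lemma larger_root_ellipse_iff:
  fixes m n x y :: real
  assumes "0 \<le> n" "n \<le> m"
  defines "L \<equiv> larger_root (x\<^sup>2 + y\<^sup>2 + n) (n * y\<^sup>2)"
  shows "L \<le> m \<longleftrightarrow> m * x\<^sup>2 + (m - n) * y\<^sup>2 \<le> (m - n) * m \<and> x\<^sup>2 \<le> m - n \<and> y\<^sup>2 \<le> m"
    and "L = m \<longleftrightarrow> m * x\<^sup>2 + (m - n) * y\<^sup>2 = (m - n) * m \<and> x\<^sup>2 \<le> m - n \<and> y\<^sup>2 \<le> m"
proof -
  have "n * y\<^sup>2 \<le> n * (x\<^sup>2 + y\<^sup>2 + n - n)"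
    using assms(1) by (simp add: mult_left_mono)
  then have disc: "4 * (n * y\<^sup>2) \<le> (x\<^sup>2 + y\<^sup>2 + n)\<^sup>2"
    by (rule quadratic_discriminant_nonneg)
  have identity: "m * (x\<^sup>2 + y\<^sup>2 + n - m) - n * y\<^sup>2 = m * x\<^sup>2 + (m - n) * y\<^sup>2 - (m - n) * m"
    by (simp add: algebra_simps)
  show "L \<le> m \<longleftrightarrow> m * x\<^sup>2 + (m - n) * y\<^sup>2 \<le> (m - n) * m \<and> x\<^sup>2 \<le> m - n \<and> y\<^sup>2 \<le> m"
    unfolding L_def larger_root_le_iff[OF disc] by (rule ellipse_inequality_iff[OF assms(1,2)])
  show "L = m \<longleftrightarrow> m * x\<^sup>2 + (m - n) * y\<^sup>2 = (m - n) * m \<and> x\<^sup>2 \<le> m - n \<and> y\<^sup>2 \<le> m"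
    unfolding L_def larger_root_eq_iff[OF disc]
    using ellipse_inequality_iff[OF assms(1,2), of x y] identity by auto
qed

lemma scaled_unit_disk_iff:
  fixes a b x y :: real
  assumes "0 \<le> a" "0 \<le> b"
  shows "(\<exists>u v. u\<^sup>2 + v\<^sup>2 \<le> 1 \<and> x = a * u \<and> y = b * v) \<longleftrightarrow>
    b\<^sup>2 * x\<^sup>2 + a\<^sup>2 * y\<^sup>2 \<le> a\<^sup>2 * b\<^sup>2 \<and> x\<^sup>2 \<le> a\<^sup>2 \<and> y\<^sup>2 \<le> b\<^sup>2"
proof
  assume "\<exists>u v. u\<^sup>2 + v\<^sup>2 \<le> 1 \<and> x = a * u \<and> y = b * v"
  then obtain u v where uv: "u\<^sup>2 + v\<^sup>2 \<le> 1" "x = a * u" "y = b * v"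
    by blast
  have "b\<^sup>2 * x\<^sup>2 + a\<^sup>2 * y\<^sup>2 = a\<^sup>2 * b\<^sup>2 * (u\<^sup>2 + v\<^sup>2)"
    by (simp add: uv algebra_simps)
  moreover have "u\<^sup>2 \<le> 1" "v\<^sup>2 \<le> 1"
    using uv(1) zero_le_power2[of u] zero_le_power2[of v] by linarith+
  ultimately show "b\<^sup>2 * x\<^sup>2 + a\<^sup>2 * y\<^sup>2 \<le> a\<^sup>2 * b\<^sup>2 \<and> x\<^sup>2 \<le> a\<^sup>2 \<and> y\<^sup>2 \<le> b\<^sup>2"
    using uv by (simp add: power_mult_distrib mult_left_le)
next
  assume xy: "b\<^sup>2 * x\<^sup>2 + a\<^sup>2 * y\<^sup>2 \<le> a\<^sup>2 * b\<^sup>2 \<and> x\<^sup>2 \<le> a\<^sup>2 \<and> y\<^sup>2 \<le> b\<^sup>2"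
  define u where "u = (if a = 0 then 0 else x / a)"
  define v where "v = (if b = 0 then 0 else y / b)"
  have x: "x = a * u" and y: "y = b * v"
    using xy by (auto simp: u_def v_def)
  have "u\<^sup>2 \<le> 1" "v\<^sup>2 \<le> 1"
    using xy assms by (auto simp: u_def v_def power_divide divide_le_eq)
  moreover have "u\<^sup>2 + v\<^sup>2 \<le> 1" if "a \<noteq> 0" "b \<noteq> 0"
  proof -
    have "a\<^sup>2 * b\<^sup>2 * (u\<^sup>2 + v\<^sup>2) \<le> a\<^sup>2 * b\<^sup>2 * 1"
      using xy unfolding x y by (simp add: algebra_simps)
    then show ?thesis
      using that by (simp add: mult_le_cancel_left)
  qed
  ultimately have "u\<^sup>2 + v\<^sup>2 \<le> 1"
    by (cases "a = 0 \<or> b = 0") (auto simp: u_def v_def)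
  then show "\<exists>u v. u\<^sup>2 + v\<^sup>2 \<le> 1 \<and> x = a * u \<and> y = b * v"
    using x y by blast
qed

lemma scaled_unit_circle_iff:
  fixes a b x y :: real
  assumes "0 \<le> a" "0 \<le> b"
  shows "(\<exists>u v. u\<^sup>2 + v\<^sup>2 = 1 \<and> x = a * u \<and> y = b * v) \<longleftrightarrow>
    b\<^sup>2 * x\<^sup>2 + a\<^sup>2 * y\<^sup>2 = a\<^sup>2 * b\<^sup>2 \<and> x\<^sup>2 \<le> a\<^sup>2 \<and> y\<^sup>2 \<le> b\<^sup>2"
proof
  assume "\<exists>u v. u\<^sup>2 + v\<^sup>2 = 1 \<and> x = a * u \<and> y = b * v"
  then obtain u v where uv: "u\<^sup>2 + v\<^sup>2 = 1" "x = a * u" "y = b * v"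
    by blast
  then have "b\<^sup>2 * x\<^sup>2 + a\<^sup>2 * y\<^sup>2 = a\<^sup>2 * b\<^sup>2"
    by (simp add: algebra_simps flip: distrib_left)
  moreover have "x\<^sup>2 \<le> a\<^sup>2 \<and> y\<^sup>2 \<le> b\<^sup>2"
    using scaled_unit_disk_iff[OF assms, of x y] uv by force
  ultimately show "b\<^sup>2 * x\<^sup>2 + a\<^sup>2 * y\<^sup>2 = a\<^sup>2 * b\<^sup>2 \<and> x\<^sup>2 \<le> a\<^sup>2 \<and> y\<^sup>2 \<le> b\<^sup>2"
    by blast
next
  assume xy: "b\<^sup>2 * x\<^sup>2 + a\<^sup>2 * y\<^sup>2 = a\<^sup>2 * b\<^sup>2 \<and> x\<^sup>2 \<le> a\<^sup>2 \<and> y\<^sup>2 \<le> b\<^sup>2"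
  then obtain u v where uv: "u\<^sup>2 + v\<^sup>2 \<le> 1" "x = a * u" "y = b * v"
    using scaled_unit_disk_iff[OF assms, of x y] by auto
  consider "a = 0" | "b = 0" | "a \<noteq> 0" "b \<noteq> 0"
    by blast
  then show "\<exists>u v. u\<^sup>2 + v\<^sup>2 = 1 \<and> x = a * u \<and> y = b * v"
  proof cases
    case 1
    have "v\<^sup>2 \<le> 1"
      using uv(1) zero_le_power2[of u] by linarith
    then have "(sqrt (1 - v\<^sup>2))\<^sup>2 + v\<^sup>2 = 1"
      by simp
    then show ?thesis
      using 1 uv by (metis mult_zero_left)
  next
    case 2
    have "u\<^sup>2 \<le> 1"
      using uv(1) zero_le_power2[of v] by linarith
    then have "u\<^sup>2 + (sqrt (1 - u\<^sup>2))\<^sup>2 = 1"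
      by simp
    then show ?thesis
      using 2 uv by (metis mult_zero_left)
  next
    case 3
    have "a\<^sup>2 * b\<^sup>2 * (u\<^sup>2 + v\<^sup>2) = a\<^sup>2 * b\<^sup>2 * 1"
      using xy unfolding uv by (simp add: algebra_simps)
    then show ?thesis
      using 3 uv by auto
  qed
qed

lemma rotation_Pair_eq_iff:
  fixes e1 e2 :: real
  assumes e: "e1\<^sup>2 + e2\<^sup>2 = 1"
  shows "(z1, z2) = (x * e1 + y * e2, x * e2 - y * e1) \<longleftrightarrow>
    z1 * e1 + z2 * e2 = x \<and> z1 * e2 - z2 * e1 = y"
proof
  assume "(z1, z2) = (x * e1 + y * e2, x * e2 - y * e1)"
  then have z: "z1 = x * e1 + y * e2" "z2 = x * e2 - y * e1"
    by auto
  have "z1 * e1 + z2 * e2 = x * (e1\<^sup>2 + e2\<^sup>2)" "z1 * e2 - z2 * e1 = y * (e1\<^sup>2 + e2\<^sup>2)"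
    unfolding z by (simp_all add: algebra_simps power2_eq_square)
  then show "z1 * e1 + z2 * e2 = x \<and> z1 * e2 - z2 * e1 = y"
    using e by simp
next
  assume "z1 * e1 + z2 * e2 = x \<and> z1 * e2 - z2 * e1 = y"
  then have xy: "x = z1 * e1 + z2 * e2" "y = z1 * e2 - z2 * e1"
    by auto
  have "x * e1 + y * e2 = z1 * (e1\<^sup>2 + e2\<^sup>2)" "x * e2 - y * e1 = z2 * (e1\<^sup>2 + e2\<^sup>2)"
    unfolding xy by (simp_all add: algebra_simps power2_eq_square)
  then show "(z1, z2) = (x * e1 + y * e2, x * e2 - y * e1)"
    using e by simp
qed

lemma mem_rotated_filled_ellipse0_iff:
  fixes a b e1 e2 z1 z2 :: real
  assumes "e1\<^sup>2 + e2\<^sup>2 = 1" "0 \<le> a" "0 \<le> b"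
  defines "x \<equiv> z1 * e1 + z2 * e2" and "y \<equiv> z1 * e2 - z2 * e1"
  shows "(z1, z2) \<in> filled_ellipse0 (a * e1) (b * e2) (a * e2) (- (b * e1)) \<longleftrightarrow>
    b\<^sup>2 * x\<^sup>2 + a\<^sup>2 * y\<^sup>2 \<le> a\<^sup>2 * b\<^sup>2 \<and> x\<^sup>2 \<le> a\<^sup>2 \<and> y\<^sup>2 \<le> b\<^sup>2"
proof -
  have "(z1, z2) \<in> filled_ellipse0 (a * e1) (b * e2) (a * e2) (- (b * e1)) \<longleftrightarrow>
      (\<exists>u v. u\<^sup>2 + v\<^sup>2 \<le> 1 \<and> (z1, z2) = ((a * u) * e1 + (b * v) * e2, (a * u) * e2 - (b * v) * e1))"
    unfolding filled_ellipse0_def by (auto simp: algebra_simps)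
  also have "\<dots> \<longleftrightarrow> (\<exists>u v. u\<^sup>2 + v\<^sup>2 \<le> 1 \<and> x = a * u \<and> y = b * v)"
    unfolding rotation_Pair_eq_iff[OF assms(1)] x_def y_def by auto
  finally show ?thesis
    unfolding scaled_unit_disk_iff[OF assms(2,3)] .
qed

lemma mem_rotated_ellipse0_iff:
  fixes a b e1 e2 z1 z2 :: real
  assumes "e1\<^sup>2 + e2\<^sup>2 = 1" "0 \<le> a" "0 \<le> b"
  defines "x \<equiv> z1 * e1 + z2 * e2" and "y \<equiv> z1 * e2 - z2 * e1"
  shows "(z1, z2) \<in> ellipse0 (a * e1) (b * e2) (a * e2) (- (b * e1)) \<longleftrightarrow>
    b\<^sup>2 * x\<^sup>2 + a\<^sup>2 * y\<^sup>2 = a\<^sup>2 * b\<^sup>2 \<and> x\<^sup>2 \<le> a\<^sup>2 \<and> y\<^sup>2 \<le> b\<^sup>2"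
proof -
  have "(z1, z2) \<in> ellipse0 (a * e1) (b * e2) (a * e2) (- (b * e1)) \<longleftrightarrow>
      (\<exists>u v. u\<^sup>2 + v\<^sup>2 = 1 \<and> (z1, z2) = ((a * u) * e1 + (b * v) * e2, (a * u) * e2 - (b * v) * e1))"
    unfolding ellipse0_def by (auto simp: algebra_simps)
  also have "\<dots> \<longleftrightarrow> (\<exists>u v. u\<^sup>2 + v\<^sup>2 = 1 \<and> x = a * u \<and> y = b * v)"
    unfolding rotation_Pair_eq_iff[OF assms(1)] x_def y_def by auto
  finally show ?thesis
    unfolding scaled_unit_circle_iff[OF assms(2,3)] .
qed

lemma larger_root_mem_rotated_ellipse0_iff:
  fixes e1 e2 m n z1 z2 :: real
  assumes "e1\<^sup>2 + e2\<^sup>2 = 1" "0 \<le> n" "n \<le> m"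
  defines "x \<equiv> z1 * e1 + z2 * e2" and "y \<equiv> z1 * e2 - z2 * e1"
  defines "L \<equiv> larger_root (x\<^sup>2 + y\<^sup>2 + n) (n * y\<^sup>2)" and "a \<equiv> sqrt (m - n)" and "b \<equiv> sqrt m"
  shows "L \<le> m \<longleftrightarrow> (z1, z2) \<in> filled_ellipse0 (a * e1) (b * e2) (a * e2) (- (b * e1))"
    and "L = m \<longleftrightarrow> (z1, z2) \<in> ellipse0 (a * e1) (b * e2) (a * e2) (- (b * e1))"
proof -
  have ab: "0 \<le> a" "0 \<le> b" "a\<^sup>2 = m - n" "b\<^sup>2 = m"
    using assms(2,3) by (simp_all add: a_def b_def)
  show "L \<le> m \<longleftrightarrow> (z1, z2) \<in> filled_ellipse0 (a * e1) (b * e2) (a * e2) (- (b * e1))"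
    using mem_rotated_filled_ellipse0_iff[OF assms(1) ab(1,2), of z1 z2]
      larger_root_ellipse_iff(1)[OF assms(2,3), of x y]
    unfolding ab(3,4) L_def x_def y_def by simp
  show "L = m \<longleftrightarrow> (z1, z2) \<in> ellipse0 (a * e1) (b * e2) (a * e2) (- (b * e1))"
    using mem_rotated_ellipse0_iff[OF assms(1) ab(1,2), of z1 z2]
      larger_root_ellipse_iff(2)[OF assms(2,3), of x y]
    unfolding ab(3,4) L_def x_def y_def by simp
qed

lemma exists_unit_direction:
  fixes x y :: real
  obtains e1 e2 where "e1\<^sup>2 + e2\<^sup>2 = 1" "x = sqrt (x\<^sup>2 + y\<^sup>2) * e1" "y = sqrt (x\<^sup>2 + y\<^sup>2) * e2"
proof (cases "x\<^sup>2 + y\<^sup>2 = 0")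
  case True
  then show ?thesis
    using that[of 1 0] by simp
next
  case False
  let ?\<rho> = "sqrt (x\<^sup>2 + y\<^sup>2)"
  have "(x / ?\<rho>)\<^sup>2 + (y / ?\<rho>)\<^sup>2 = 1"
    using False by (simp add: power_divide add_divide_distrib[symmetric])
  then show ?thesis
    using that[of "x / ?\<rho>" "y / ?\<rho>"] False by simp
qed

lemma horodecki_M_T_mat_eq_iff:
  fixes b0 b3 b4 k e1 e2 z1 z2 :: real
  defines "n \<equiv> b3\<^sup>2 + b4\<^sup>2" and "m \<equiv> k - b0\<^sup>2"
  defines "r \<equiv> sqrt (k - n)" and "a \<equiv> sqrt (m - n)" and "b \<equiv> sqrt m"
  assumes e: "e1\<^sup>2 + e2\<^sup>2 = 1" "b3 = sqrt n * e1" "b4 = sqrt n * e2" and "n \<le> m"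
  shows "horodecki_M (T_mat b0 z1 z2 b3 b4) = k \<longleftrightarrow>
    (z1, z2) \<in> (circle0 r \<inter> filled_ellipse0 (a * e1) (b * e2) (a * e2) (- (b * e1))) \<union>
      (ellipse0 (a * e1) (b * e2) (a * e2) (- (b * e1)) \<inter> disk0 r)"
proof -
  define x where "x = z1 * e1 + z2 * e2"
  define y where "y = z1 * e2 - z2 * e1"
  have n: "0 \<le> n" "0 \<le> b0\<^sup>2"
    by (simp_all add: n_def)
  have "x\<^sup>2 + y\<^sup>2 = (z1\<^sup>2 + z2\<^sup>2) * (e1\<^sup>2 + e2\<^sup>2)"
    by (simp add: x_def y_def power2_eq_square algebra_simps)
  then have xy: "x\<^sup>2 + y\<^sup>2 = z1\<^sup>2 + z2\<^sup>2"
    using e(1) by simp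
  have "z1 * b4 - z2 * b3 = sqrt n * y"
    by (simp add: e(2,3) y_def algebra_simps)
  then have q: "(z1 * b4 - z2 * b3)\<^sup>2 = n * y\<^sup>2"
    using n by (simp add: power_mult_distrib)
  have p: "z1\<^sup>2 + z2\<^sup>2 + b3\<^sup>2 + b4\<^sup>2 = x\<^sup>2 + y\<^sup>2 + n"
    using xy by (simp add: n_def)
  define L where "L = larger_root (x\<^sup>2 + y\<^sup>2 + n) (n * y\<^sup>2)"
  have M: "horodecki_M (T_mat b0 z1 z2 b3 b4) = k \<longleftrightarrow>
      (x\<^sup>2 + y\<^sup>2 + n = k \<and> L \<le> m) \<or> (L = m \<and> x\<^sup>2 + y\<^sup>2 + n \<le> k)"
    using larger_root_add_smaller_root[of "x\<^sup>2 + y\<^sup>2 + n" "n * y\<^sup>2"]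
    unfolding horodecki_M_T_mat p q L_def m_def by (auto simp: max_def)
  have A: "L \<le> m \<longleftrightarrow> (z1, z2) \<in> filled_ellipse0 (a * e1) (b * e2) (a * e2) (- (b * e1))"
    and E: "L = m \<longleftrightarrow> (z1, z2) \<in> ellipse0 (a * e1) (b * e2) (a * e2) (- (b * e1))"
    using larger_root_mem_rotated_ellipse0_iff[OF e(1) n(1) \<open>n \<le> m\<close>]
    by (simp_all add: L_def x_def y_def a_def b_def)
  have "0 \<le> k - n"
    using \<open>n \<le> m\<close> n(2) unfolding m_def by linarith
  then have "k - n = r\<^sup>2"
    by (simp add: r_def)
  then have C: "x\<^sup>2 + y\<^sup>2 + n = k \<longleftrightarrow> (z1, z2) \<in> circle0 r"
    and D: "x\<^sup>2 + y\<^sup>2 + n \<le> k \<longleftrightarrow> (z1, z2) \<in> disk0 r"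
    using xy by (auto simp: circle0_def disk0_def)
  show ?thesis
    unfolding M A E C D by blast
qed

section \<open>Connectedness\<close>

lemma linear_image_sphere_eq_image_cball:
  fixes f :: "'a::real_normed_vector \<Rightarrow> 'b::real_vector"
  assumes "linear f" "f w = 0" "w \<noteq> 0"
  shows "f ` sphere 0 1 = f ` cball 0 1"
proof
  show "f ` cball 0 1 \<subseteq> f ` sphere 0 1"
  proof
    fix y assume "y \<in> f ` cball 0 1"
    then obtain u where u: "norm u \<le> 1" "y = f u" by auto
    define T where "T = 2 / norm w"
    have "2 = norm ((u + T *\<^sub>R w) - u)"
      using assms(3) by (simp add: T_def)
    also have "\<dots> \<le> norm (u + T *\<^sub>R w) + norm u"
      by (rule norm_triangle_ineq4)
    finally have "1 \<le> norm (u + T *\<^sub>R w)"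
      using u(1) by linarith
    moreover have "continuous_on {0..T} (\<lambda>t. norm (u + t *\<^sub>R w))"
      by (intro continuous_intros)
    ultimately obtain t where "norm (u + t *\<^sub>R w) = 1"
      using IVT'[of "\<lambda>t. norm (u + t *\<^sub>R w)" 0 1 T] u(1) assms(3) by (auto simp: T_def)
    moreover have "f (u + t *\<^sub>R w) = y"
      using assms(1,2) u(2) by (simp add: linear_add linear_scale)
    ultimately show "y \<in> f ` sphere 0 1" by force
  qed
qed auto

lemma frontier_injective_linear_image:
  fixes f :: "'a::euclidean_space \<Rightarrow> 'a"
  assumes "linear f" "inj f"
  shows "frontier (f ` S) = f ` frontier S"
  using assms by (simp add: frontier_def closure_injective_linear_image
      interior_injective_linear_image image_set_diff)

lemma connected_frontier_convex:
  fixes C :: "'a::euclidean_space set"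
  assumes "convex C" "bounded C" "interior C \<noteq> {}" "DIM('a) \<noteq> 1"
  shows "connected (frontier C)"
  using connected_sphere_gen[of C] assms
  by (simp add: rel_frontier_nonempty_interior aff_dim_nonempty_interior)

lemma connected_sphere_linear_image_arcs:
  fixes f :: "'a::euclidean_space \<Rightarrow> 'a"
  assumes f: "linear f" and "0 < r" "DIM('a) \<noteq> 1"
  shows "connected ((sphere 0 r \<inter> f ` cball 0 1) \<union> (f ` sphere 0 1 \<inter> cball 0 r))"
proof (cases "inj f")
  case True
  let ?C = "cball 0 r \<inter> f ` cball 0 1"
  have "closed (f ` cball 0 1)"
    using f True by (simp add: closed_injective_linear_image)
  then have frontier: "frontier ?C = (sphere 0 r \<inter> f ` cball 0 1) \<union> (cball 0 r \<inter> f ` sphere 0 1)"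
    using f True by (simp add: frontier_Int_closed frontier_injective_linear_image)
  have "0 \<in> f ` ball 0 1"
    by (rule image_eqI[where x = 0]) (simp_all add: linear_0[OF f])
  then have "0 \<in> interior ?C"
    using f True \<open>0 < r\<close> by (simp add: interior_injective_linear_image)
  then have "interior ?C \<noteq> {}"
    by blast
  then have "connected (frontier ?C)"
    using f assms by (intro connected_frontier_convex convex_Int convex_linear_image
        bounded_Int) auto
  then show ?thesis by (simp add: frontier Int_commute)
next
  case False
  then obtain w where "f w = 0" "w \<noteq> 0"
    using f linear_injective_0 by blast
  then have "f ` sphere 0 1 = f ` cball 0 1"
    using f by (intro linear_image_sphere_eq_image_cball)
  then have "(sphere 0 r \<inter> f ` cball 0 1) \<union> (f ` sphere 0 1 \<inter> cball 0 r) = cball 0 r \<inter> f ` cball 0 1"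
    by auto
  moreover have "convex (cball 0 r \<inter> f ` cball 0 1)"
    using f by (intro convex_Int convex_linear_image) auto
  ultimately show ?thesis by (simp add: convex_connected)
qed

lemma norm_Pair_power2: "(norm (x, y))\<^sup>2 = x\<^sup>2 + y\<^sup>2"
  by (simp add: norm_Pair)

lemma circle0_eq_sphere: "0 \<le> r \<Longrightarrow> circle0 r = sphere 0 r"
  unfolding circle0_def
  by (auto simp: norm_Pair_power2[symmetric])

lemma disk0_eq_cball: "0 \<le> r \<Longrightarrow> disk0 r = cball 0 r"
  unfolding disk0_def
  by (auto simp: norm_Pair_power2[symmetric])

definition ellipse_map :: "real \<Rightarrow> real \<Rightarrow> real \<Rightarrow> real \<Rightarrow> real \<times> real \<Rightarrow> real \<times> real" where
  "ellipse_map a b c d z = (a * fst z + b * snd z, c * fst z + d * snd z)"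

lemma linear_ellipse_map: "linear (ellipse_map a b c d)"
  unfolding linear_iff ellipse_map_def by (auto simp: algebra_simps)

lemma ellipse0_eq_image: "ellipse0 a b c d = ellipse_map a b c d ` sphere 0 1"
  unfolding ellipse0_def circle0_eq_sphere[symmetric, OF zero_le_one]
  by (auto simp: ellipse_map_def circle0_def image_def)

lemma filled_ellipse0_eq_image: "filled_ellipse0 a b c d = ellipse_map a b c d ` cball 0 1"
  unfolding filled_ellipse0_def disk0_eq_cball[symmetric, OF zero_le_one]
  by (auto simp: ellipse_map_def disk0_def image_def)

lemma circle0_ellipse0_arcs_radius_0:
  "(circle0 0 \<inter> filled_ellipse0 a b c d) \<union> (ellipse0 a b c d \<inter> disk0 0) = {(0, 0)}"
proof -
  have "(0, 0) \<in> filled_ellipse0 a b c d"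
    unfolding filled_ellipse0_def by (auto intro!: exI[of _ 0])
  then show ?thesis
    by (auto simp: circle0_def disk0_def sum_power2_le_zero_iff)
qed

lemma connected_circle0_ellipse0_arcs:
  assumes "0 \<le> r"
  shows "connected ((circle0 r \<inter> filled_ellipse0 a b c d) \<union> (ellipse0 a b c d \<inter> disk0 r))"
proof (cases "r = 0")
  case True
  then show ?thesis
    by (simp add: circle0_ellipse0_arcs_radius_0)
next
  case False
  then have "0 < r"
    using assms by simp
  then show ?thesis
    using connected_sphere_linear_image_arcs[OF linear_ellipse_map]
    by (simp add: assms circle0_eq_sphere disk0_eq_cball ellipse0_eq_image filled_ellipse0_eq_image)
qed

lemma circle0_ellipse0_arcs_pos_radius:
  assumes "0 \<le> r"
  obtains r' a' b' c' d' where "0 < r'"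
    "(circle0 r \<inter> filled_ellipse0 a b c d) \<union> (ellipse0 a b c d \<inter> disk0 r) =
     (circle0 r' \<inter> filled_ellipse0 a' b' c' d') \<union> (ellipse0 a' b' c' d' \<inter> disk0 r')"
proof (cases "r = 0")
  case True
  have "ellipse0 0 0 0 0 = {(0, 0)}" "filled_ellipse0 0 0 0 0 = {(0, 0)}"
    unfolding ellipse0_def filled_ellipse0_def by (auto intro: exI[of _ 1] exI[of _ 0])
  then have "(circle0 1 \<inter> filled_ellipse0 0 0 0 0) \<union> (ellipse0 0 0 0 0 \<inter> disk0 1) = {(0, 0)}"
    by (simp add: circle0_def disk0_def)
  then show ?thesis
    using that[of 1 0 0 0 0] True by (simp add: circle0_ellipse0_arcs_radius_0)
next
  case False
  then show ?thesis
    using that[of r a b c d] assms by simp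
qed

theorem proposition5:
  fixes b0 b3 b4 k :: real
  defines "S \<equiv> {(b1, b2). horodecki_M (T_mat b0 b1 b2 b3 b4) = k}"
  shows "connected S \<and>
         (S = {} \<or>
          (\<exists>r a b c d. r > 0 \<and>
             S \<subseteq> circle0 r \<union> ellipse0 a b c d \<and>
             S = (circle0 r \<inter> filled_ellipse0 a b c d) \<union> (ellipse0 a b c d \<inter> disk0 r)))"
proof (cases "b3\<^sup>2 + b4\<^sup>2 \<le> k - b0\<^sup>2")
  case False
  have "horodecki_M (T_mat b0 b1 b2 b3 b4) \<noteq> k" for b1 b2
    using False horodecki_M_T_mat_ge[of b3 b4 b0 b1 b2] by linarith
  then show ?thesis
    by (simp add: S_def)
next
  case True
  obtain e1 e2 where e: "e1\<^sup>2 + e2\<^sup>2 = 1" "b3 = sqrt (b3\<^sup>2 + b4\<^sup>2) * e1" "b4 = sqrt (b3\<^sup>2 + b4\<^sup>2) * e2"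
    by (rule exists_unit_direction)
  define r where "r = sqrt (k - (b3\<^sup>2 + b4\<^sup>2))"
  define a where "a = sqrt (k - b0\<^sup>2 - (b3\<^sup>2 + b4\<^sup>2))"
  define b where "b = sqrt (k - b0\<^sup>2)"
  have S: "S = (circle0 r \<inter> filled_ellipse0 (a * e1) (b * e2) (a * e2) (- (b * e1))) \<union>
      (ellipse0 (a * e1) (b * e2) (a * e2) (- (b * e1)) \<inter> disk0 r)"
    using horodecki_M_T_mat_eq_iff[OF e True] by (auto simp: S_def r_def a_def b_def)
  have "0 \<le> r"
    using True zero_le_power2[of b0] unfolding r_def by (intro real_sqrt_ge_zero) linarith
  then obtain r' a' b' c' d' where "0 < r'"
    "S = (circle0 r' \<inter> filled_ellipse0 a' b' c' d') \<union> (ellipse0 a' b' c' d' \<inter> disk0 r')"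
    unfolding S by (rule circle0_ellipse0_arcs_pos_radius)
  moreover have "connected S"
    unfolding S using \<open>0 \<le> r\<close> by (rule connected_circle0_ellipse0_arcs)
  ultimately show ?thesis
    by blast
qed

end
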